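(* Let $2\le R<K$ and $\epsilon\in(0,1)$, and let $$m=\left\lceil\frac{K(K-1)}{(K-R)(R-1)}\log\!\Big(\frac{K}{\epsilon}\Big)\right\rceil.$$ Choose $\mathcal{Y}_1,\ldots,\mathcal{Y}_m$ independently and uniformly at random among the $R$-element subsets of $[K]$. Let $Z$ be uniform on $[K]$, independent of the $\mathcal{Y}_i$, and, given $\mathcal{Y}_1,\ldots,\mathcal{Y}_m$ and $Z=k$, let $Y_1,\ldots,Y_m$ be conditionally independent with $Y_i=k$ if $k\in\mathcal{Y}_i$ and $Y_i$ uniform on $\mathcal{Y}_i$ if $k\notin\mathcal{Y}_i$. Let $g$ be the maximum-likelihood decoder $g(y)\in\arg\max_{k\in[K]}\mathcal{L}(y;k)$ with $\mathcal{L}(y;k)=\prod_{i=1}^m\mathbb{P}(Y_i=y_i\mid Z=k,\mathcal{Y}_1,\ldots,\mathcal{Y}_m)$, ties broken arbitrarily. Then $\mathbb{P}(g(Y)\ne Z)\le\epsilon$, where the probability is over the random choice of the $\mathcal{Y}_i$, of $Z$, and of $Y$.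
   Context: $[K]=\{1,\ldots,K\}$; $\log$ denotes the natural logarithm. *)

theory Defs
  imports "HOL-Probability.Probability"
begin

definition rsubsets :: "nat \<Rightarrow> nat \<Rightarrow> nat set set" where
  "rsubsets K R = {S. S \<subseteq> {1..K} \<and> card S = R}"

definition chan :: "nat set \<Rightarrow> nat \<Rightarrow> nat pmf" where
  "chan S k = (if k \<in> S then return_pmf k else pmf_of_set S)"

definition likelihood :: "nat \<Rightarrow> (nat \<Rightarrow> nat set) \<Rightarrow> (nat \<Rightarrow> nat) \<Rightarrow> nat \<Rightarrow> real" where
  "likelihood m Ys y k = (\<Prod>i<m. pmf (chan (Ys i) k) (y i))"

definition ml_experiment :: "nat \<Rightarrow> nat \<Rightarrow> nat \<Rightarrow> ((nat \<Rightarrow> nat set) \<times> nat \<times> (nat \<Rightarrow> nat)) pmf" where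
  "ml_experiment K R m =
     do { Ys \<leftarrow> Pi_pmf {..<m} {} (\<lambda>_. pmf_of_set (rsubsets K R));
          z \<leftarrow> pmf_of_set {1..K};
          y \<leftarrow> Pi_pmf {..<m} 0 (\<lambda>i. chan (Ys i) z);
          return_pmf (Ys, z, y) }"

end

theory Submission
  imports Defs
begin

text \<open>
  The true index Z always has positive likelihood, so the maximum-likelihood decoder can only
  err if some k \<noteq> Z is consistent with every observation. For a fixed k, observation i is
  consistent with k with probability at most 1/R when k lies in the i-th set (then Y_i must
  hit k) and at most 1 otherwise; averaging over the uniform choice of that set gives
  1 - (R - 1)/K, independently for each i. A union bound over the K candidates bounds the
  error probability by K (1 - (R - 1)/K)^m \<le> K exp (-(R - 1) m / K), which is at most \<epsilon>
  by the choice of m.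
\<close>

definition consistent :: "nat \<Rightarrow> (nat \<Rightarrow> nat set) \<Rightarrow> (nat \<Rightarrow> nat) \<Rightarrow> nat \<Rightarrow> bool" where
  "consistent m Ys y k \<longleftrightarrow> (\<forall>i<m. y i \<in> set_pmf (chan (Ys i) k))"

definition confusion_event :: "nat \<Rightarrow> nat \<Rightarrow> ((nat \<Rightarrow> nat set) \<times> nat \<times> (nat \<Rightarrow> nat)) set" where
  "confusion_event m k = {(Ys, z, y). z \<noteq> k \<and> consistent m Ys y k}"

lemma measure_bind_pmf:
  "measure_pmf.prob (bind_pmf p f) A = measure_pmf.expectation p (\<lambda>x. measure_pmf.prob (f x) A)"
proof -
  have "emeasure (measure_pmf (bind_pmf p f)) A = (\<integral>\<^sup>+x. ennreal (measure_pmf.prob (f x) A) \<partial>p)"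
    unfolding emeasure_bind_pmf by (simp add: measure_pmf.emeasure_eq_measure)
  also have "\<dots> = ennreal (measure_pmf.expectation p (\<lambda>x. measure_pmf.prob (f x) A))"
    by (intro nn_integral_eq_integral measure_pmf.integrable_const_bound[where B = 1]) auto
  finally show ?thesis
    by (simp add: measure_pmf.emeasure_eq_measure)
qed

lemma measure_bind_pmf_le:
  assumes "\<And>x. x \<in> set_pmf p \<Longrightarrow> measure_pmf.prob (f x) A \<le> c x"
    and "integrable p c"
  shows "measure_pmf.prob (bind_pmf p f) A \<le> measure_pmf.expectation p c"
  unfolding measure_bind_pmf
  by (intro integral_mono_AE AE_pmfI assms measure_pmf.integrable_const_bound[where B = 1]) auto

lemma finite_rsubsets: "finite (rsubsets K R)"
  unfolding rsubsets_def by (rule finite_subset[of _ "Pow {1..K}"]) auto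

lemma rsubsets_nonempty: "R \<le> K \<Longrightarrow> rsubsets K R \<noteq> {}"
  unfolding rsubsets_def by (auto intro!: exI[of _ "{1..R}"])

lemma prob_uniform_rsubset_avoids:
  assumes "k \<in> {1..K}" and "R \<le> K"
  shows "measure_pmf.prob (pmf_of_set (rsubsets K R)) {S. k \<notin> S} = (real K - real R) / real K"
proof -
  have "rsubsets K R \<inter> {S. k \<notin> S} = {S. S \<subseteq> {1..K} - {k} \<and> card S = R}"
    using assms by (auto simp: rsubsets_def)
  then have avoid: "card (rsubsets K R \<inter> {S. k \<notin> S}) = (K - 1) choose R"
    using assms by (simp add: n_subsets)
  have all: "card (rsubsets K R) = K choose R"
    by (simp add: rsubsets_def n_subsets)
  have "real (K - R) * real (K choose R) = real K * real ((K - 1) choose R)"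
    using binomial_absorb_comp[of K R] by (metis of_nat_mult)
  moreover have "0 < K choose R"
    using assms by simp
  ultimately show ?thesis
    using assms by (simp add: measure_pmf_of_set finite_rsubsets rsubsets_nonempty avoid all
      field_simps of_nat_diff)
qed

lemma expectation_uniform_rsubset_confusability:
  assumes "k \<in> {1..K}" and "1 \<le> R" and "R \<le> K"
  shows "measure_pmf.expectation (pmf_of_set (rsubsets K R)) (\<lambda>S. if k \<in> S then 1 / real R else 1)
    = 1 - (real R - 1) / real K"
proof -
  let ?U = "pmf_of_set (rsubsets K R)"
  have integrable: "integrable ?U f" for f :: "nat set \<Rightarrow> real"
    using assms by (intro integrable_measure_pmf_finite) (simp add: finite_rsubsets rsubsets_nonempty)
  have "(\<lambda>S. if k \<in> S then 1 / real R else 1) = (\<lambda>S. 1 / real R + (1 - 1 / real R) * indicator {S. k \<notin> S} S)"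
    by (auto simp: indicator_def)
  then have "measure_pmf.expectation ?U (\<lambda>S. if k \<in> S then 1 / real R else 1)
      = 1 / real R + (1 - 1 / real R) * measure_pmf.prob ?U {S. k \<notin> S}"
    by (simp add: integrable)
  also have "\<dots> = 1 - (real R - 1) / real K"
    using assms by (simp add: prob_uniform_rsubset_avoids field_simps)
  finally show ?thesis .
qed

lemma set_pmf_chan: "finite S \<Longrightarrow> S \<noteq> {} \<Longrightarrow> set_pmf (chan S k) = (if k \<in> S then {k} else S)"
  by (simp add: chan_def)

lemma prob_chan_confusable:
  assumes "finite S" and "S \<noteq> {}" and "z \<noteq> k"
  shows "measure_pmf.prob (chan S z) (set_pmf (chan S k)) \<le> (if k \<in> S then 1 / real (card S) else 1)"
proof (cases "k \<in> S")
  case True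
  then show ?thesis
    using assms by (cases "z \<in> S") (simp_all add: set_pmf_chan chan_def measure_pmf_of_set)
qed (simp add: measure_pmf.prob_le_1)

lemma likelihood_pos_iff: "0 < likelihood m Ys y k \<longleftrightarrow> consistent m Ys y k"
proof -
  have "0 < likelihood m Ys y k \<longleftrightarrow> likelihood m Ys y k \<noteq> 0"
    unfolding likelihood_def by (simp add: less_le prod_nonneg)
  also have "\<dots> \<longleftrightarrow> consistent m Ys y k"
    unfolding likelihood_def consistent_def by (auto simp: set_pmf_eq)
  finally show ?thesis .
qed

lemma consistent_if_likelihood_ge:
  assumes "consistent m Ys y z" and "likelihood m Ys y z \<le> likelihood m Ys y k"
  shows "consistent m Ys y k"
  using assms likelihood_pos_iff by (metis order.strict_trans2)

lemma set_pmf_ml_experiment: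
  assumes "R \<le> K" and "0 < K" and "(Ys, z, y) \<in> set_pmf (ml_experiment K R m)"
  shows "z \<in> {1..K}" and "consistent m Ys y z"
  using assms by (auto simp: ml_experiment_def set_Pi_pmf PiE_dflt_def consistent_def)

lemma prob_confusion_given_sets:
  assumes "\<forall>i<m. Ys i \<in> rsubsets K R" and "1 \<le> R"
  shows "measure_pmf.prob (Z \<bind> (\<lambda>z. map_pmf (\<lambda>y. (Ys, z, y)) (Pi_pmf {..<m} 0 (\<lambda>i. chan (Ys i) z))))
      (confusion_event m k)
    \<le> (\<Prod>i<m. if k \<in> Ys i then 1 / real R else 1)"
proof -
  have sets: "finite (Ys i)" "Ys i \<noteq> {}" "card (Ys i) = R" if "i < m" for i
    using assms that by (auto simp: rsubsets_def intro: finite_subset)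
  have "measure_pmf.prob (map_pmf (\<lambda>y. (Ys, z, y)) (Pi_pmf {..<m} 0 (\<lambda>i. chan (Ys i) z)))
      (confusion_event m k) \<le> (\<Prod>i<m. if k \<in> Ys i then 1 / real R else 1)" for z
  proof (cases "z = k")
    case False
    then have "(\<lambda>y. (Ys, z, y)) -` confusion_event m k = Pi {..<m} (\<lambda>i. set_pmf (chan (Ys i) k))"
      by (auto simp: confusion_event_def consistent_def)
    then have "measure_pmf.prob (map_pmf (\<lambda>y. (Ys, z, y)) (Pi_pmf {..<m} 0 (\<lambda>i. chan (Ys i) z)))
        (confusion_event m k) = (\<Prod>i<m. measure_pmf.prob (chan (Ys i) z) (set_pmf (chan (Ys i) k)))"
      by (simp add: measure_Pi_pmf_Pi)
    also have "\<dots> \<le> (\<Prod>i<m. if k \<in> Ys i then 1 / real R else 1)"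
      using False sets prob_chan_confusable by (intro prod_mono) fastforce
    finally show ?thesis .
  qed (simp add: confusion_event_def vimage_def prod_nonneg)
  then have "measure_pmf.prob (Z \<bind> (\<lambda>z. map_pmf (\<lambda>y. (Ys, z, y)) (Pi_pmf {..<m} 0 (\<lambda>i. chan (Ys i) z))))
      (confusion_event m k) \<le> measure_pmf.expectation Z (\<lambda>_. \<Prod>i<m. if k \<in> Ys i then 1 / real R else 1)"
    by (rule measure_bind_pmf_le) simp
  then show ?thesis
    by simp
qed

lemma prob_confusion_event_le:
  assumes "k \<in> {1..K}" and "1 \<le> R" and "R \<le> K"
  shows "measure_pmf.prob (ml_experiment K R m) (confusion_event m k) \<le> (1 - (real R - 1) / real K) ^ m"
proof -
  let ?U = "pmf_of_set (rsubsets K R)"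
  let ?h = "\<lambda>S. if k \<in> S then 1 / real R else 1"
  have h_bounds: "0 \<le> ?h S" "?h S \<le> 1" for S
    using assms by auto
  have "measure_pmf.prob (ml_experiment K R m) (confusion_event m k)
      \<le> measure_pmf.expectation (Pi_pmf {..<m} {} (\<lambda>_. ?U)) (\<lambda>Ys. \<Prod>i<m. ?h (Ys i))"
    unfolding ml_experiment_def map_pmf_def[symmetric]
  proof (rule measure_bind_pmf_le)
    fix Ys assume "Ys \<in> set_pmf (Pi_pmf {..<m} {} (\<lambda>_. ?U))"
    then show "measure_pmf.prob (pmf_of_set {1..K} \<bind>
        (\<lambda>z. map_pmf (\<lambda>y. (Ys, z, y)) (Pi_pmf {..<m} 0 (\<lambda>i. chan (Ys i) z)))) (confusion_event m k)
      \<le> (\<Prod>i<m. ?h (Ys i))"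
      using assms by (intro prob_confusion_given_sets[where K = K])
        (simp_all add: set_Pi_pmf PiE_dflt_def finite_rsubsets rsubsets_nonempty)
  qed (intro measure_pmf.integrable_const_bound[where B = 1] AE_pmfI,
       auto simp: abs_prod intro!: prod_le_1 prod_nonneg h_bounds)
  also have "\<dots> = (\<Prod>i<m. measure_pmf.expectation ?U ?h)"
    using assms by (intro expectation_prod_Pi_pmf integrable_measure_pmf_finite)
      (auto simp: finite_rsubsets rsubsets_nonempty)
  also have "\<dots> = (1 - (real R - 1) / real K) ^ m"
    using assms by (simp add: expectation_uniform_rsubset_confusability)
  finally show ?thesis .
qed

lemma mult_one_minus_power_le:
  fixes a n \<epsilon> :: real
  assumes "0 \<le> a" and "a \<le> 1" and "0 < n" and "0 < \<epsilon>" and "ln (n / \<epsilon>) \<le> a * real m"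
  shows "n * (1 - a) ^ m \<le> \<epsilon>"
proof -
  have "(1 - a) ^ m \<le> exp (- a) ^ m"
    using exp_ge_add_one_self[of "- a"] assms by (intro power_mono) auto
  also have "\<dots> = exp (- (a * real m))"
    by (simp add: exp_of_nat_mult[symmetric] mult.commute)
  also have "\<dots> \<le> exp (- ln (n / \<epsilon>))"
    using assms by simp
  also have "\<dots> = \<epsilon> / n"
    using assms by (simp add: exp_minus)
  finally show ?thesis
    using assms by (simp add: field_simps)
qed

lemma ln_le_sample_size:
  fixes K R m :: nat and \<epsilon> :: real
  assumes "2 \<le> R" and "R < K" and "0 < \<epsilon>" and "\<epsilon> < 1"
    and "m = nat \<lceil>(real K * (real K - 1)) / ((real K - real R) * (real R - 1)) * ln (real K / \<epsilon>)\<rceil>"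
  shows "ln (real K / \<epsilon>) \<le> (real R - 1) / real K * real m"
proof -
  define c where "c = (real K * (real K - 1)) / ((real K - real R) * (real R - 1))"
  define L where "L = ln (real K / \<epsilon>)"
  have "c * L \<le> real m"
    unfolding assms(5) c_def L_def by (rule real_nat_ceiling_ge)
  have "0 < L"
    using assms by (simp add: L_def field_simps)
  have "real K - real R \<noteq> 0" "real R - 1 \<noteq> 0" "real K \<noteq> 0"
    using assms by auto
  then have "(real R - 1) / real K * c = (real K - 1) / (real K - real R)"
    unfolding c_def by (simp add: divide_simps)
  also have "\<dots> \<ge> 1"
    using assms by simp
  finally have "L \<le> (real R - 1) / real K * c * L"
    using \<open>0 < L\<close> mult_right_mono[of 1 "(real R - 1) / real K * c" L] by linarith
  also have "\<dots> \<le> (real R - 1) / real K * real m"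
    using \<open>c * L \<le> real m\<close> assms unfolding mult.assoc by (intro mult_left_mono) auto
  finally show ?thesis
    unfolding L_def .
qed

theorem theorem5:
  fixes K R m :: nat and \<epsilon> :: real
    and g :: "(nat \<Rightarrow> nat set) \<Rightarrow> (nat \<Rightarrow> nat) \<Rightarrow> nat"
  assumes "2 \<le> R" and "R < K"
    and "0 < \<epsilon>" and "\<epsilon> < 1"
    and "m = nat \<lceil>(real K * (real K - 1)) / ((real K - real R) * (real R - 1)) * ln (real K / \<epsilon>)\<rceil>"
    and "\<And>Ys y. g Ys y \<in> {1..K}"
    and "\<And>Ys y k. k \<in> {1..K} \<Longrightarrow> likelihood m Ys y k \<le> likelihood m Ys y (g Ys y)"
  shows "measure_pmf.prob (ml_experiment K R m) {(Ys, z, y). g Ys y \<noteq> z} \<le> \<epsilon>"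
proof -
  let ?p = "ml_experiment K R m"
  have "(Ys, z, y) \<in> confusion_event m (g Ys y)" if "(Ys, z, y) \<in> set_pmf ?p" "g Ys y \<noteq> z" for Ys z y
    using that assms set_pmf_ml_experiment[OF _ _ that(1)] consistent_if_likelihood_ge
    by (simp add: confusion_event_def)
  then have "measure_pmf.prob ?p {(Ys, z, y). g Ys y \<noteq> z}
      \<le> measure_pmf.prob ?p (\<Union>k\<in>{1..K}. confusion_event m k)"
    using assms(6) by (intro measure_pmf.finite_measure_mono_AE AE_pmfI) fastforce+
  also have "\<dots> \<le> (\<Sum>k\<in>{1..K}. measure_pmf.prob ?p (confusion_event m k))"
    by (rule measure_pmf.finite_measure_subadditive_finite) auto
  also have "\<dots> \<le> (\<Sum>k\<in>{1..K}. (1 - (real R - 1) / real K) ^ m)"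
    using assms by (intro sum_mono prob_confusion_event_le) auto
  also have "\<dots> = real K * (1 - (real R - 1) / real K) ^ m"
    by simp
  also have "\<dots> \<le> \<epsilon>"
    using assms ln_le_sample_size[OF assms(1-5)] by (intro mult_one_minus_power_le) auto
  finally show ?thesis .
qed

end
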